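(* Let $H_n=\sum_{j=1}^n\frac1j$, let $\gamma$ be the Euler–Mascheroni constant, $\Gamma$ the gamma function, $z^{\overline{k}} = z(z+1) \cdots (z + k -1)$ the rising factorial, and $G$ the Barnes $G$-function. Then: (i) for $k \in \{1, 2,\ldots\}$, $$\sum_{n = 1}^\infty \left(H_n - \log\sqrt[k]{n^{\overline{k}}} - \gamma + \frac{k - 2}{2n} \right) = \frac{\gamma k + 1 -\log (2 \pi )}{2} + \frac{\log G(k+1)}{k};$$ (ii) for $x >0$, $$\sum_{n=1}^\infty \left(H_n - \log(n + x -1) - \gamma + \frac{x}{n} - \frac{3}{2n}\right) = \gamma x + \log\Gamma(x) + \frac{1 - \gamma -\log (2\pi)}{2}.$$
   Context: The Barnes $G$-function is the entire function $G(z+1) = (2\pi)^{z/2} e^{-\frac{z+z^2(1+\gamma)}{2}} \prod_{m=1}^\infty \left(1+\frac{z}{m}\right)^m e^{-z+\frac{z^2}{2m}}$; it satisfies $G(1)=1$ and $G(z+1)=\Gamma(z)G(z)$. *)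

theory Defs
  imports "HOL-Analysis.Analysis"
begin

definition barnes_G :: "complex \<Rightarrow> complex" where
  "barnes_G z = (let w = z - 1 in
     (complex_of_real (2 * pi)) powr (w / 2)
     * exp (- (w + w\<^sup>2 * (1 + complex_of_real euler_mascheroni)) / 2)
     * (\<Prod>m. (1 + w / of_nat (Suc m)) ^ (Suc m)
              * exp (- w + w\<^sup>2 / (2 * of_nat (Suc m)))))"

end

theory Submission
  imports Defs "HOL-Real_Asymp.Real_Asymp"
begin

(* The partial sums of (ii) telescope to (N + x - 1/2) H_N - N (1 + gamma) - ln (x^(rising N)).
   Expressing the rising factorial through Gauss's product Gamma_series x N, which tends to
   Gamma x, leaves two classical limits: N (H_N - ln N - gamma) --> 1/2, and Stirling's constant
   ln N! - (N + 1/2) ln N + N --> ln (2 pi) / 2. The Stirling remainder is monotone and bounded,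
   and its limit is identified through Gamma (1/2) = sqrt pi and the duplication (2N)! =
   4^N (1/2)^(rising N) N!.
   Part (i) is the average of (ii) over x = 1, ..., k: the logarithm of the k-th root of
   n^(rising k) is the mean of ln (n + j). The resulting constant sum_{j<k} ln j! equals
   ln G(k+1), which is read off the Weierstrass product by induction on k: the logarithms of
   the factors at k + 1 and at k differ by terms whose partial sums are expressed through H_M
   and the Stirling remainder. *)

definition stirling_remainder :: "nat \<Rightarrow> real" where
  "stirling_remainder n = ln (fact n) - (real n + 1/2) * ln (real n) + real n"

lemma stirling_remainder_diff:
  "stirling_remainder n - stirling_remainder (Suc n)
     = (real n + 1/2) * (ln (real n + 1) - ln (real n)) - 1"
proof -
  have "ln (fact (Suc n) :: real) = ln (real n + 1) + ln (fact n)"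
    by (simp add: ln_mult add.commute)
  then show ?thesis
    unfolding stirling_remainder_def by (simp add: algebra_simps)
qed

lemma stirling_remainder_diff_bounds:
  assumes "n \<ge> 1"
  shows stirling_remainder_diff_nonneg: "0 \<le> stirling_remainder n - stirling_remainder (Suc n)"
    and stirling_remainder_diff_le:
      "stirling_remainder n - stirling_remainder (Suc n) \<le> 1 / (4 * real n) - 1 / (4 * (real n + 1))"
proof -
  have n: "real n > 0"
    using assms by simp
  have "2 / (2 * real n + 1) \<le> ln (real n + 1) - ln (real n)"
    using ln_inverse_approx_ge[of "real n" "real n + 1"] n by simp
  then have "(real n + 1/2) * (2 / (2 * real n + 1))
      \<le> (real n + 1/2) * (ln (real n + 1) - ln (real n))"
    by (rule mult_left_mono) simp
  moreover have "(real n + 1/2) * (2 / (2 * real n + 1)) = 1"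
    using n by (simp add: field_simps)
  ultimately show "0 \<le> stirling_remainder n - stirling_remainder (Suc n)"
    using stirling_remainder_diff[of n] by linarith
  have "ln (real n + 1) - ln (real n) \<le> (1 / real n + 1 / (real n + 1)) / 2"
    using ln_inverse_approx_le[of "real n" 1] n by (simp add: inverse_eq_divide)
  then have "(real n + 1/2) * (ln (real n + 1) - ln (real n))
      \<le> (real n + 1/2) * ((1 / real n + 1 / (real n + 1)) / 2)"
    by (rule mult_left_mono) simp
  moreover have "(real n + 1/2) * ((1 / real n + 1 / (real n + 1)) / 2) - 1
      = 1 / (4 * real n) - 1 / (4 * (real n + 1))"
    using n by (simp add: divide_simps) (simp add: algebra_simps)
  ultimately show
    "stirling_remainder n - stirling_remainder (Suc n) \<le> 1 / (4 * real n) - 1 / (4 * (real n + 1))"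
    using stirling_remainder_diff[of n] by linarith
qed

lemma stirling_remainder_lower_bound: "3/4 + 1 / (4 * (real n + 1)) \<le> stirling_remainder (Suc n)"
proof (induction n)
  case 0
  then show ?case by (simp add: stirling_remainder_def)
next
  case (Suc n)
  then show ?case
    using stirling_remainder_diff_le[of "Suc n"] by (simp add: algebra_simps)
qed

lemma convergent_stirling_remainder: "convergent stirling_remainder"
proof -
  have "decseq (\<lambda>n. stirling_remainder (Suc n))"
    using stirling_remainder_diff_nonneg by (intro decseq_SucI) simp
  moreover have "\<forall>n. 0 \<le> stirling_remainder (Suc n)"
  proof
    fix n
    have "0 \<le> 1 / (4 * (real n + 1))"
      by simp
    then show "0 \<le> stirling_remainder (Suc n)"
      using stirling_remainder_lower_bound[of n] by linarith
  qed
  ultimately obtain L where "(\<lambda>n. stirling_remainder (Suc n)) \<longlonglongrightarrow> L"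
    by (rule decseq_convergent)
  then show ?thesis
    by (auto simp: convergent_def filterlim_sequentially_Suc)
qed

lemma ln_Gamma_series_real:
  assumes "x > 0" "n \<ge> 1"
  shows "ln (Gamma_series x n)
    = ln (fact n) + x * ln (real n) - ln (pochhammer x n) - ln (x + real n)"
proof -
  have "pochhammer x n > 0" "x + real n > 0"
    using assms by (simp_all add: pochhammer_pos)
  then show ?thesis
    unfolding Gamma_series_def using assms
    by (simp add: pochhammer_Suc ln_div ln_mult)
qed

lemma ln_Gamma_series_one_half:
  assumes "n \<ge> 1"
  shows "ln (Gamma_series (1/2) n)
    = 2 * stirling_remainder n - stirling_remainder (2 * n)
      + (ln (real n) - ln (real n + 1/2)) - ln 2 / 2"
proof -
  have "pochhammer (1/2 :: real) n > 0"
    by (simp add: pochhammer_pos)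
  then have "ln (fact (2 * n) :: real) = real (2 * n) * ln 2 + ln (pochhammer (1/2) n) + ln (fact n)"
    by (simp add: fact_double ln_mult ln_realpow)
  moreover have "ln (real (2 * n)) = ln 2 + ln (real n)"
    using assms by (simp add: ln_mult)
  moreover have "ln (Gamma_series (1/2) n)
      = ln (fact n) + ln (real n) / 2 - ln (pochhammer (1/2) n) - ln (real n + 1/2)"
    using ln_Gamma_series_real[of "1/2" n] assms by (simp add: add.commute)
  ultimately show ?thesis
    unfolding stirling_remainder_def by (simp add: algebra_simps)
qed

lemma stirling_remainder_LIMSEQ: "stirling_remainder \<longlonglongrightarrow> ln (2 * pi) / 2"
proof -
  obtain L where L: "stirling_remainder \<longlonglongrightarrow> L"
    using convergent_stirling_remainder by (auto simp: convergent_def)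
  have "(\<lambda>n. stirling_remainder (2 * n)) \<longlonglongrightarrow> L"
    using LIMSEQ_subseq_LIMSEQ[OF L, of "\<lambda>n. 2 * n"] by (simp add: strict_mono_def o_def)
  moreover have "(\<lambda>n. ln (real n) - ln (real n + 1/2)) \<longlonglongrightarrow> 0"
    by real_asymp
  ultimately have "(\<lambda>n. 2 * stirling_remainder n - stirling_remainder (2 * n)
      + (ln (real n) - ln (real n + 1/2)) - ln 2 / 2) \<longlonglongrightarrow> 2 * L - L + 0 - ln 2 / 2"
    by (intro tendsto_intros L)
  moreover have "(\<lambda>n. ln (Gamma_series (1/2) n)) \<longlonglongrightarrow> ln (Gamma (1/2 :: real))"
    by (intro tendsto_intros) (simp add: Gamma_one_half_real)
  then have "(\<lambda>n. 2 * stirling_remainder n - stirling_remainder (2 * n)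
      + (ln (real n) - ln (real n + 1/2)) - ln 2 / 2) \<longlonglongrightarrow> ln (Gamma (1/2 :: real))"
    by (rule Lim_transform_eventually)
      (use ln_Gamma_series_one_half in \<open>auto simp: eventually_at_top_linorder\<close>)
  ultimately have "L - ln 2 / 2 = ln (sqrt pi)"
    by (auto dest: LIMSEQ_unique simp: Gamma_one_half_real)
  then have "L = ln (2 * pi) / 2"
    by (simp add: ln_sqrt ln_mult)
  with L show ?thesis
    by simp
qed

lemma harm_remainder_LIMSEQ:
  "(\<lambda>n. real n * (harm n - ln (real n) - euler_mascheroni)) \<longlonglongrightarrow> 1/2"
proof (rule tendsto_sandwich)
  have bounds: "harm n - ln (real n + 1) + 1 / (2 * (real n + 1)) \<le> euler_mascheroni"
    "euler_mascheroni \<le> harm n - ln (real n + 1) + 1 / (2 * real n)" if "n \<ge> 1" for n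
    using euler_mascheroni_bounds[OF that] by (simp_all add: inverse_eq_divide add.commute)
  show "eventually (\<lambda>n. real n * (ln (real n + 1) - ln (real n)) - 1/2
      \<le> real n * (harm n - ln (real n) - euler_mascheroni)) sequentially"
  proof (rule eventually_mono[OF eventually_ge_at_top[of 1]])
    fix n :: nat
    assume "n \<ge> 1"
    with bounds(2)[OF this] show "real n * (ln (real n + 1) - ln (real n)) - 1/2
        \<le> real n * (harm n - ln (real n) - euler_mascheroni)"
      by (auto dest: mult_left_mono[of _ _ "real n"] simp: algebra_simps)
  qed
  show "eventually (\<lambda>n. real n * (harm n - ln (real n) - euler_mascheroni)
      \<le> real n * (ln (real n + 1) - ln (real n)) - real n / (2 * (real n + 1))) sequentially"
  proof (rule eventually_mono[OF eventually_ge_at_top[of 1]])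
    fix n :: nat
    assume "n \<ge> 1"
    with bounds(1)[OF this] show "real n * (harm n - ln (real n) - euler_mascheroni)
        \<le> real n * (ln (real n + 1) - ln (real n)) - real n / (2 * (real n + 1))"
      by (auto dest: mult_left_mono[of _ _ "real n"] simp: algebra_simps)
  qed
  show "(\<lambda>n. real n * (ln (real n + 1) - ln (real n)) - 1/2) \<longlonglongrightarrow> 1/2"
    by real_asymp
  show "(\<lambda>n. real n * (ln (real n + 1) - ln (real n)) - real n / (2 * (real n + 1)))
      \<longlonglongrightarrow> 1/2"
    by real_asymp
qed

lemma harm_ln_Gamma_partial_sum:
  assumes "x > 0"
  shows "(\<Sum>m<N. let n = Suc m in
            harm n - ln (real n + x - 1) - euler_mascheroni + x / real n - 3 / (2 * real n))
    = (real N + x - 1/2) * harm N - real N * (1 + euler_mascheroni) - ln (pochhammer x N)"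
proof (induction N)
  case 0
  then show ?case by (simp add: harm_def)
next
  case (Suc N)
  have "pochhammer x N > 0" "x + real N > 0"
    using assms by (simp_all add: pochhammer_pos)
  then have "ln (pochhammer x (Suc N)) = ln (pochhammer x N) + ln (x + real N)"
    by (simp add: pochhammer_Suc ln_mult)
  moreover have "(let n = Suc N in
            harm n - ln (real n + x - 1) - euler_mascheroni + x / real n - 3 / (2 * real n))
      = harm N + 1 / (real N + 1) - ln (x + real N) - euler_mascheroni
        + x / (real N + 1) - 3 / (2 * (real N + 1))"
    by (simp add: Let_def harm_Suc inverse_eq_divide add_ac)
  ultimately show ?case
    unfolding sum.lessThan_Suc Suc.IH
    by (simp add: harm_Suc inverse_eq_divide divide_simps) (simp add: algebra_simps)
qed

lemma sums_harm_ln_Gamma: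
  assumes "x > 0"
  shows "(\<lambda>m. let n = Suc m in
            harm n - ln (real n + x - 1) - euler_mascheroni + x / real n - 3 / (2 * real n))
         sums (euler_mascheroni * x + ln (Gamma x) + (1 - euler_mascheroni - ln (2 * pi)) / 2)"
proof -
  define F where "F N = x * (harm N - ln (real N))
      + real N * (harm N - ln (real N) - euler_mascheroni) - (1/2) * (harm N - ln (real N))
      - stirling_remainder N + (ln (x + real N) - ln (real N)) + ln (Gamma_series x N)" for N
  have "F \<longlonglongrightarrow> x * euler_mascheroni + 1/2 - (1/2) * euler_mascheroni
      - ln (2 * pi) / 2 + 0 + ln (Gamma x)"
    unfolding F_def
  proof (intro tendsto_intros euler_mascheroni_LIMSEQ harm_remainder_LIMSEQ stirling_remainder_LIMSEQ)
    show "(\<lambda>N. ln (x + real N) - ln (real N)) \<longlonglongrightarrow> 0"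
      by real_asymp
    show "Gamma x \<noteq> 0"
      using assms by (simp add: Gamma_real_pos less_imp_neq[symmetric])
  qed
  also have "x * euler_mascheroni + 1/2 - (1/2) * euler_mascheroni - ln (2 * pi) / 2 + 0 + ln (Gamma x)
      = euler_mascheroni * x + ln (Gamma x) + (1 - euler_mascheroni - ln (2 * pi)) / 2"
    by (simp add: field_simps)
  finally have lim:
    "F \<longlonglongrightarrow> euler_mascheroni * x + ln (Gamma x) + (1 - euler_mascheroni - ln (2 * pi)) / 2" .
  have partial_sum: "(\<Sum>m<N. let n = Suc m in
            harm n - ln (real n + x - 1) - euler_mascheroni + x / real n - 3 / (2 * real n)) = F N"
    if "N \<ge> 1" for N
    unfolding harm_ln_Gamma_partial_sum[OF assms] F_def ln_Gamma_series_real[OF assms that]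
      stirling_remainder_def by (simp add: algebra_simps)
  show ?thesis
    unfolding sums_def
    by (rule Lim_transform_eventually[OF lim])
      (use partial_sum in \<open>auto simp: eventually_at_top_linorder intro!: exI[of _ 1]\<close>)
qed

(* the logarithm of the factor with index m + 1 in the product defining G(k + 1) *)
definition barnes_ln_factor :: "nat \<Rightarrow> nat \<Rightarrow> real" where
  "barnes_ln_factor k m = real (Suc m) * ln (1 + real k / real (Suc m)) - real k
     + (real k)\<^sup>2 / (2 * real (Suc m))"

lemma barnes_ln_factor_Suc_diff:
  "barnes_ln_factor (Suc k) m - barnes_ln_factor k m
   = real (Suc m) * (ln (real m + real k + 2) - ln (real m + real k + 1)) - 1
     + (real k + 1/2) / real (Suc m)"
proof -
  have ln_ratio: "ln (1 + real j / real (Suc m)) = ln (real m + real j + 1) - ln (real m + 1)" for j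
  proof -
    have "1 + real j / real (Suc m) = (real m + real j + 1) / (real m + 1)"
      by (simp add: field_simps)
    then show ?thesis
      by (simp add: ln_div add_pos_nonneg)
  qed
  have "(real (Suc k))\<^sup>2 - (real k)\<^sup>2 = 2 * real k + 1"
    by (simp add: power2_eq_square algebra_simps)
  then have "(real (Suc k))\<^sup>2 / (2 * real (Suc m)) - (real k)\<^sup>2 / (2 * real (Suc m))
      = (real k + 1/2) / real (Suc m)"
    unfolding diff_divide_distrib[symmetric] by (simp add: field_simps)
  then show ?thesis
    unfolding barnes_ln_factor_def ln_ratio by (simp add: algebra_simps)
qed

lemma barnes_ln_factor_Suc_diff_sums:
  "(\<lambda>m. barnes_ln_factor (Suc k) m - barnes_ln_factor k m)
     sums (ln (fact k) + (real k + 1/2) * euler_mascheroni + real k + 1 - ln (2 * pi) / 2)"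
proof -
  define D where "D M = real M * (ln (real M + real k + 1) - ln (real M + real k))
      - stirling_remainder (M + k) + (real k + 1/2) * (harm M - ln (real M + real k))
      + real k + ln (fact k)" for M
  have partial_sum: "(\<Sum>m<M. barnes_ln_factor (Suc k) m - barnes_ln_factor k m) = D M" for M
  proof (induction M)
    case 0
    then show ?case by (simp add: D_def stirling_remainder_def harm_def)
  next
    case (Suc M)
    have "D (Suc M) - D M = barnes_ln_factor (Suc k) M - barnes_ln_factor k M"
      unfolding barnes_ln_factor_Suc_diff D_def
      using stirling_remainder_diff[of "M + k"]
      by (simp add: harm_Suc inverse_eq_divide algebra_simps add_divide_distrib)
    with Suc.IH show ?case
      by simp
  qed
  have "(\<lambda>M. real M * (ln (real M + real k + 1) - ln (real M + real k))) \<longlonglongrightarrow> 1"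
    by real_asymp
  moreover have "(\<lambda>M. stirling_remainder (M + k)) \<longlonglongrightarrow> ln (2 * pi) / 2"
    by (rule LIMSEQ_ignore_initial_segment[OF stirling_remainder_LIMSEQ])
  moreover have "(\<lambda>M. (harm M - ln (real M)) - (ln (real M + real k) - ln (real M)))
      \<longlonglongrightarrow> euler_mascheroni - 0"
    by (intro tendsto_intros euler_mascheroni_LIMSEQ) real_asymp
  then have "(\<lambda>M. harm M - ln (real M + real k)) \<longlonglongrightarrow> euler_mascheroni"
    by simp
  ultimately have "D \<longlonglongrightarrow> 1 - ln (2 * pi) / 2 + (real k + 1/2) * euler_mascheroni
      + real k + ln (fact k)"
    unfolding D_def by (intro tendsto_add tendsto_diff tendsto_mult_left tendsto_const)
  then show ?thesis
    unfolding sums_def partial_sum by (simp add: algebra_simps)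
qed

lemma barnes_ln_factor_sums:
  "(\<lambda>m. barnes_ln_factor k m) sums ((\<Sum>j<k. ln (fact j)) - real k / 2 * ln (2 * pi)
     + (real k + (real k)\<^sup>2 * (1 + euler_mascheroni)) / 2)"
proof (induction k)
  case 0
  then show ?case by (simp add: barnes_ln_factor_def)
next
  case (Suc k)
  from sums_add[OF Suc.IH barnes_ln_factor_Suc_diff_sums[of k]] show ?case
    by (simp add: algebra_simps power2_eq_square add_divide_distrib)
qed

lemma barnes_G_of_nat: "barnes_G (of_nat k + 1) = of_real (\<Prod>j<k. fact j)"
proof -
  define L where "L = (\<Sum>j<k. ln (fact j)) - real k / 2 * ln (2 * pi)
     + (real k + (real k)\<^sup>2 * (1 + euler_mascheroni)) / 2"
  define f :: "nat \<Rightarrow> complex" where "f m = (1 + of_nat k / of_nat (Suc m)) ^ Suc m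
      * exp (- of_nat k + (of_nat k)\<^sup>2 / (2 * of_nat (Suc m)))" for m
  have "f = (\<lambda>m. of_real (exp (barnes_ln_factor k m)))"
  proof
    fix m
    have "1 + real k / real (Suc m) > 0"
      by (simp add: add_pos_nonneg)
    then have "exp (barnes_ln_factor k m)
        = (1 + real k / real (Suc m)) ^ Suc m * exp (- real k + (real k)\<^sup>2 / (2 * real (Suc m)))"
      unfolding barnes_ln_factor_def exp_add exp_diff exp_of_nat_mult
      by (simp add: exp_minus divide_inverse mult_ac)
    then show "f m = of_real (exp (barnes_ln_factor k m))"
      unfolding f_def by (simp add: exp_of_real[symmetric])
  qed
  moreover have "(\<lambda>m. exp (barnes_ln_factor k m)) has_prod exp L"
    using sums_imp_has_prod_exp[OF barnes_ln_factor_sums] unfolding L_def has_prod_def by blast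
  ultimately have "f has_prod of_real (exp L)"
    by (simp only: has_prod_of_real_iff)
  have "barnes_G (of_nat k + 1) = of_real (2 * pi) powr (of_nat k / 2)
      * exp (- (of_nat k + (of_nat k)\<^sup>2 * (1 + of_real euler_mascheroni)) / 2) * prodinf f"
    unfolding barnes_G_def f_def Let_def by simp
  also have "prodinf f = of_real (exp L)"
    by (rule has_prod_unique[symmetric]) fact
  also have "complex_of_real (2 * pi) powr (of_nat k / 2)
      * exp (- (of_nat k + (of_nat k)\<^sup>2 * (1 + of_real euler_mascheroni)) / 2) * of_real (exp L)
    = of_real ((2 * pi) powr (real k / 2)
      * exp (- (real k + (real k)\<^sup>2 * (1 + euler_mascheroni)) / 2) * exp L)"
    using powr_of_real[of "2 * pi" "real k / 2"] by (simp add: exp_of_real[symmetric])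
  also have "(2 * pi) powr (real k / 2)
      * exp (- (real k + (real k)\<^sup>2 * (1 + euler_mascheroni)) / 2) * exp L
      = exp (\<Sum>j<k. ln (fact j))"
    unfolding L_def by (simp add: powr_def flip: exp_add) (simp add: field_simps)
  also have "exp (\<Sum>j<k. ln (fact j)) = (\<Prod>j<k. fact j :: real)"
    by (simp add: exp_sum)
  finally show ?thesis .
qed

lemma ln_barnes_G_of_nat:
  "ln (Re (barnes_G (of_nat k + 1))) = (\<Sum>j<k. ln (Gamma (real (Suc j))))"
  unfolding barnes_G_of_nat Re_complex_of_real by (simp add: ln_prod Gamma_fact)

lemma sum_lessThan_of_nat_Suc: "(\<Sum>j<k. real (Suc j)) = real k * (real k + 1) / 2"
  by (induction k) (simp_all add: field_simps)

lemma ln_root_pochhammer: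
  assumes "k \<ge> 1" "x > 0"
  shows "ln (root k (pochhammer x k)) = (\<Sum>j<k. ln (x + real j)) / real k"
  using assms
  by (simp add: pochhammer_prod atLeast0LessThan ln_root ln_prod add_pos_nonneg prod_pos)

lemma harm_ln_root_pochhammer_eq_mean:
  assumes "k \<ge> 1" "n \<ge> 1"
  shows "harm n - ln (root k (pochhammer (real n) k)) - euler_mascheroni + (real k - 2) / (2 * real n)
    = (\<Sum>j<k. harm n - ln (real n + real (Suc j) - 1) - euler_mascheroni
                + real (Suc j) / real n - 3 / (2 * real n)) / real k"
proof -
  have n: "real n > 0"
    using assms by simp
  have "ln (real n + real (Suc j) - 1) = ln (real n + real j)" for j
    by simp
  then have sum_eq: "(\<Sum>j<k. harm n - ln (real n + real (Suc j) - 1) - euler_mascheroni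
                + real (Suc j) / real n - 3 / (2 * real n))
      = real k * (harm n - euler_mascheroni - 3 / (2 * real n))
        - (\<Sum>j<k. ln (real n + real j)) + (\<Sum>j<k. real (Suc j)) / real n"
    by (simp add: sum.distrib sum_subtractf sum_divide_distrib[symmetric] algebra_simps
        del: of_nat_Suc)
  show ?thesis
    unfolding sum_eq sum_lessThan_of_nat_Suc ln_root_pochhammer[OF assms(1) n]
    using assms n by (simp add: field_simps)
qed

lemma average_harm_ln_Gamma_value:
  assumes "k \<ge> 1"
  shows "(\<Sum>j<k. euler_mascheroni * real (Suc j) + ln (Gamma (real (Suc j)))
                + (1 - euler_mascheroni - ln (2 * pi)) / 2) / real k
    = (euler_mascheroni * real k + 1 - ln (2 * pi)) / 2 + ln (Re (barnes_G (of_nat k + 1))) / real k"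
proof -
  have "(\<Sum>j<k. euler_mascheroni * real (Suc j) + ln (Gamma (real (Suc j)))
                + (1 - euler_mascheroni - ln (2 * pi)) / 2)
      = euler_mascheroni * (\<Sum>j<k. real (Suc j)) + ln (Re (barnes_G (of_nat k + 1)))
        + real k * ((1 - euler_mascheroni - ln (2 * pi)) / 2)"
    by (simp add: sum.distrib sum_distrib_left ln_barnes_G_of_nat del: of_nat_Suc)
  then show ?thesis
    using assms unfolding sum_lessThan_of_nat_Suc by (simp add: field_simps)
qed

lemma sums_harm_ln_root_pochhammer:
  assumes "k \<ge> 1"
  shows "(\<lambda>m. let n = Suc m in
            harm n - ln (root k (pochhammer (real n) k)) - euler_mascheroni
            + (real k - 2) / (2 * real n))
         sums ((euler_mascheroni * real k + 1 - ln (2 * pi)) / 2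
               + ln (Re (barnes_G (of_nat k + 1))) / real k)"
proof -
  have "(\<lambda>m. harm (Suc m) - ln (real (Suc m) + real (Suc j) - 1) - euler_mascheroni
                + real (Suc j) / real (Suc m) - 3 / (2 * real (Suc m)))
      sums (euler_mascheroni * real (Suc j) + ln (Gamma (real (Suc j)))
                + (1 - euler_mascheroni - ln (2 * pi)) / 2)" for j
    using sums_harm_ln_Gamma[of "real (Suc j)"] unfolding Let_def by simp
  then have "(\<lambda>m. (\<Sum>j<k. harm (Suc m) - ln (real (Suc m) + real (Suc j) - 1)
                - euler_mascheroni + real (Suc j) / real (Suc m) - 3 / (2 * real (Suc m))) / real k)
      sums ((\<Sum>j<k. euler_mascheroni * real (Suc j) + ln (Gamma (real (Suc j)))
                + (1 - euler_mascheroni - ln (2 * pi)) / 2) / real k)"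
    by (intro sums_divide sums_sum)
  moreover have "(\<lambda>m. let n = Suc m in
            harm n - ln (root k (pochhammer (real n) k)) - euler_mascheroni
            + (real k - 2) / (2 * real n))
      = (\<lambda>m. (\<Sum>j<k. harm (Suc m) - ln (real (Suc m) + real (Suc j) - 1)
                - euler_mascheroni + real (Suc j) / real (Suc m) - 3 / (2 * real (Suc m))) / real k)"
    unfolding Let_def by (rule ext, rule harm_ln_root_pochhammer_eq_mean[OF assms]) simp
  ultimately show ?thesis
    by (simp only: average_harm_ln_Gamma_value[OF assms])
qed

theorem mainTheorem13:
  shows "(\<forall>k::nat. k \<ge> 1 \<longrightarrow>
           (\<lambda>m. let n = Suc m in
              harm n - ln (root k (pochhammer (real n) k)) - euler_mascheroni
              + (real k - 2) / (2 * real n))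
           sums ((euler_mascheroni * real k + 1 - ln (2 * pi)) / 2
                 + ln (Re (barnes_G (of_nat k + 1))) / real k))
       \<and> (\<forall>x::real. x > 0 \<longrightarrow>
           (\<lambda>m. let n = Suc m in
              harm n - ln (real n + x - 1) - euler_mascheroni + x / real n - 3 / (2 * real n))
           sums (euler_mascheroni * x + ln (Gamma x) + (1 - euler_mascheroni - ln (2 * pi)) / 2))"
  using sums_harm_ln_root_pochhammer sums_harm_ln_Gamma by blast

end
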